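(* Let $A$ be a semiprime ring which does not contain an infinite direct sum of nonzero two-sided ideals. Let $Y$ be a non-singular right $A$-module which is automorphism-invariant and square-free, such that $\operatorname{Hom}_A(D_1,D_2)=0$ for any two submodules $D_1,D_2$ of $Y$ with $D_1\cap D_2=0$, and such that for every set $\{K_i\mid i\in I\}$ of closed submodules of $Y$ the submodule $\sum_{i\in I}K_i$ is automorphism-invariant. Then either $Y=0$ or $Y$ contains a nonzero quasi-injective uniform submodule.
   Context: All modules are unitary right modules. A module $M$ is automorphism-invariant if $M$ is invariant under every automorphism of its injective hull. A module $X$ is quasi-injective if for every submodule $X_1\subseteq X$ every homomorphism $X_1\to X$ extends to an endomorphism of $X$. A module is square-free if it contains no direct sum of two nonzero isomorphic submodules; uniform if any two nonzero submodules intersect nontrivially. A submodule $Y$ of $X$ is closed if it has no proper essential extension inside $X$. Non-singular: no nonzero element has essential right annihilator in $A$. A ring is semiprime if it has no nonzero nilpotent ideals. *)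

theory Defs
  imports "HOL-Algebra.Ring" "HOL-Algebra.Ideal" "HOL-Algebra.Ideal_Product"
begin

record ('m, 'r) rmodule =
  mcarrier :: "'m set"
  madd :: "'m \<Rightarrow> 'm \<Rightarrow> 'm"
  mzero :: 'm
  mact :: "'m \<Rightarrow> 'r \<Rightarrow> 'm"

definition rmodule :: "('r, 'b) ring_scheme \<Rightarrow> ('m, 'r) rmodule \<Rightarrow> bool" where
  "rmodule A M \<longleftrightarrow> ring A \<and>
     mzero M \<in> mcarrier M \<and>
     (\<forall>x\<in>mcarrier M. \<forall>y\<in>mcarrier M. madd M x y \<in> mcarrier M) \<and>
     (\<forall>x\<in>mcarrier M. \<forall>a\<in>carrier A. mact M x a \<in> mcarrier M) \<and>
     (\<forall>x\<in>mcarrier M. \<forall>y\<in>mcarrier M. \<forall>z\<in>mcarrier M.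
        madd M (madd M x y) z = madd M x (madd M y z)) \<and>
     (\<forall>x\<in>mcarrier M. \<forall>y\<in>mcarrier M. madd M x y = madd M y x) \<and>
     (\<forall>x\<in>mcarrier M. madd M (mzero M) x = x) \<and>
     (\<forall>x\<in>mcarrier M. \<exists>y\<in>mcarrier M. madd M x y = mzero M) \<and>
     (\<forall>x\<in>mcarrier M. \<forall>y\<in>mcarrier M. \<forall>a\<in>carrier A.
        mact M (madd M x y) a = madd M (mact M x a) (mact M y a)) \<and>
     (\<forall>x\<in>mcarrier M. \<forall>a\<in>carrier A. \<forall>b\<in>carrier A.
        mact M x (a \<oplus>\<^bsub>A\<^esub> b) = madd M (mact M x a) (mact M x b)) \<and>
     (\<forall>x\<in>mcarrier M. \<forall>a\<in>carrier A. \<forall>b\<in>carrier A.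
        mact M x (a \<otimes>\<^bsub>A\<^esub> b) = mact M (mact M x a) b) \<and>
     (\<forall>x\<in>mcarrier M. mact M x \<one>\<^bsub>A\<^esub> = x)"

definition regular_rmodule :: "('r, 'b) ring_scheme \<Rightarrow> ('r, 'r) rmodule" where
  "regular_rmodule A = \<lparr> mcarrier = carrier A, madd = add A, mzero = zero A, mact = mult A \<rparr>"

definition submodule :: "('r, 'b) ring_scheme \<Rightarrow> ('m, 'r) rmodule \<Rightarrow> 'm set \<Rightarrow> bool" where
  "submodule A M N \<longleftrightarrow> N \<subseteq> mcarrier M \<and> mzero M \<in> N \<and>
     (\<forall>x\<in>N. \<forall>y\<in>N. madd M x y \<in> N) \<and>
     (\<forall>x\<in>N. \<forall>a\<in>carrier A. mact M x a \<in> N)"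

definition right_ideal :: "('r, 'b) ring_scheme \<Rightarrow> 'r set \<Rightarrow> bool" where
  "right_ideal A I \<longleftrightarrow> submodule A (regular_rmodule A) I"

definition rhom :: "('r, 'b) ring_scheme \<Rightarrow> ('m, 'r) rmodule \<Rightarrow> 'm set
    \<Rightarrow> ('n, 'r) rmodule \<Rightarrow> 'n set \<Rightarrow> ('m \<Rightarrow> 'n) \<Rightarrow> bool" where
  "rhom A M S N T f \<longleftrightarrow> f \<in> S \<rightarrow> T \<and>
     (\<forall>x\<in>S. \<forall>y\<in>S. f (madd M x y) = madd N (f x) (f y)) \<and>
     (\<forall>x\<in>S. \<forall>a\<in>carrier A. f (mact M x a) = mact N (f x) a)"

definition essential_in :: "('r, 'b) ring_scheme \<Rightarrow> ('m, 'r) rmodule \<Rightarrow> 'm set \<Rightarrow> 'm set \<Rightarrow> bool" where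
  "essential_in A M S T \<longleftrightarrow> submodule A M S \<and> submodule A M T \<and> S \<subseteq> T \<and>
     (\<forall>W. submodule A M W \<and> W \<subseteq> T \<and> W \<noteq> {mzero M} \<longrightarrow> W \<inter> S \<noteq> {mzero M})"

definition closed_in :: "('r, 'b) ring_scheme \<Rightarrow> ('m, 'r) rmodule \<Rightarrow> 'm set \<Rightarrow> 'm set \<Rightarrow> bool" where
  "closed_in A M S T \<longleftrightarrow> submodule A M S \<and> submodule A M T \<and> S \<subseteq> T \<and>
     (\<forall>Z. submodule A M Z \<and> Z \<subseteq> T \<and> essential_in A M S Z \<longrightarrow> Z = S)"

definition submodule_sum :: "('r, 'b) ring_scheme \<Rightarrow> ('m, 'r) rmodule \<Rightarrow> 'm set set \<Rightarrow> 'm set" where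
  "submodule_sum A M \<K> = \<Inter> {N. submodule A M N \<and> \<Union>\<K> \<subseteq> N}"

definition baer_injective :: "('r, 'b) ring_scheme \<Rightarrow> ('e, 'r) rmodule \<Rightarrow> bool" where
  "baer_injective A E \<longleftrightarrow>
     (\<forall>I f. right_ideal A I \<and> rhom A (regular_rmodule A) I E (mcarrier E) f \<longrightarrow>
        (\<exists>e\<in>mcarrier E. \<forall>a\<in>I. f a = mact E e a))"

definition injective_hull :: "('r, 'b) ring_scheme \<Rightarrow> ('m, 'r) rmodule \<Rightarrow> 'm set
    \<Rightarrow> ('e, 'r) rmodule \<Rightarrow> ('m \<Rightarrow> 'e) \<Rightarrow> bool" where
  "injective_hull A M S E \<iota> \<longleftrightarrow> rmodule A E \<and> baer_injective A E \<and>
     rhom A M S E (mcarrier E) \<iota> \<and> inj_on \<iota> S \<and>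
     essential_in A E (\<iota> ` S) (mcarrier E)"

definition rautomorphism :: "('r, 'b) ring_scheme \<Rightarrow> ('e, 'r) rmodule \<Rightarrow> ('e \<Rightarrow> 'e) \<Rightarrow> bool" where
  "rautomorphism A E \<sigma> \<longleftrightarrow> rhom A E (mcarrier E) E (mcarrier E) \<sigma> \<and>
     bij_betw \<sigma> (mcarrier E) (mcarrier E)"

text \<open>The submodule S of M is automorphism-invariant, with injective hulls taken in the
  type 'e: an injective hull exists in 'e, and S is invariant under every automorphism of
  every injective hull in 'e (all injective hulls are isomorphic over S).\<close>
definition aut_invariant :: "'e itself \<Rightarrow> ('r, 'b) ring_scheme \<Rightarrow> ('m, 'r) rmodule \<Rightarrow> 'm set \<Rightarrow> bool" where
  "aut_invariant _ A M S \<longleftrightarrow>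
     (\<exists>(E :: ('e, 'r) rmodule) \<iota>. injective_hull A M S E \<iota>) \<and>
     (\<forall>(E :: ('e, 'r) rmodule) \<iota> \<sigma>. injective_hull A M S E \<iota> \<and> rautomorphism A E \<sigma>
        \<longrightarrow> \<sigma> ` (\<iota> ` S) \<subseteq> \<iota> ` S)"

definition quasi_injective :: "('r, 'b) ring_scheme \<Rightarrow> ('m, 'r) rmodule \<Rightarrow> 'm set \<Rightarrow> bool" where
  "quasi_injective A M X \<longleftrightarrow>
     (\<forall>X1 f. submodule A M X1 \<and> X1 \<subseteq> X \<and> rhom A M X1 M X f \<longrightarrow>
        (\<exists>g. rhom A M X M X g \<and> (\<forall>x\<in>X1. g x = f x)))"

definition square_free :: "('r, 'b) ring_scheme \<Rightarrow> ('m, 'r) rmodule \<Rightarrow> 'm set \<Rightarrow> bool" where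
  "square_free A M X \<longleftrightarrow>
     \<not> (\<exists>N1 N2 f. submodule A M N1 \<and> submodule A M N2 \<and> N1 \<subseteq> X \<and> N2 \<subseteq> X \<and>
          N1 \<inter> N2 = {mzero M} \<and> N1 \<noteq> {mzero M} \<and> N2 \<noteq> {mzero M} \<and>
          rhom A M N1 M N2 f \<and> bij_betw f N1 N2)"

definition uniform :: "('r, 'b) ring_scheme \<Rightarrow> ('m, 'r) rmodule \<Rightarrow> 'm set \<Rightarrow> bool" where
  "uniform A M X \<longleftrightarrow> X \<noteq> {mzero M} \<and>
     (\<forall>U V. submodule A M U \<and> submodule A M V \<and> U \<subseteq> X \<and> V \<subseteq> X \<and>
        U \<noteq> {mzero M} \<and> V \<noteq> {mzero M} \<longrightarrow> U \<inter> V \<noteq> {mzero M})"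

definition nonsingular :: "('r, 'b) ring_scheme \<Rightarrow> ('m, 'r) rmodule \<Rightarrow> bool" where
  "nonsingular A M \<longleftrightarrow>
     (\<forall>x\<in>mcarrier M. x \<noteq> mzero M \<longrightarrow>
        \<not> essential_in A (regular_rmodule A) {a \<in> carrier A. mact M x a = mzero M} (carrier A))"

text \<open>Powers of a two-sided ideal: ideal_pow A I n = I^(n+1).\<close>
definition ideal_pow :: "('r, 'b) ring_scheme \<Rightarrow> 'r set \<Rightarrow> nat \<Rightarrow> 'r set" where
  "ideal_pow A I n = ((\<lambda>J. ideal_prod A J I) ^^ n) I"

definition semiprime :: "('r, 'b) ring_scheme \<Rightarrow> bool" where
  "semiprime A \<longleftrightarrow> ring A \<and>
     (\<forall>I. ideal I A \<and> (\<exists>n. ideal_pow A I n = {\<zero>\<^bsub>A\<^esub>}) \<longrightarrow> I = {\<zero>\<^bsub>A\<^esub>})"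

definition independent_ideals :: "('r, 'b) ring_scheme \<Rightarrow> 'r set set \<Rightarrow> bool" where
  "independent_ideals A \<S> \<longleftrightarrow>
     (\<forall>F g. finite F \<and> F \<subseteq> \<S> \<and> (\<forall>J\<in>F. g J \<in> J) \<and> finsum A g F = \<zero>\<^bsub>A\<^esub>
        \<longrightarrow> (\<forall>J\<in>F. g J = \<zero>\<^bsub>A\<^esub>))"

definition no_infinite_direct_sum_of_ideals :: "('r, 'b) ring_scheme \<Rightarrow> bool" where
  "no_infinite_direct_sum_of_ideals A \<longleftrightarrow>
     \<not> (\<exists>\<S>. infinite \<S> \<and> (\<forall>J\<in>\<S>. ideal J A \<and> J \<noteq> {\<zero>\<^bsub>A\<^esub>}) \<and> independent_ideals A \<S>)"

end

theory Submission
  imports Defs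
begin

text \<open>
  A nonzero \<open>Y\<close> has a uniform submodule. Otherwise repeated splitting yields nonzero elements \<open>x\<^sub>n\<close>
  with \<open>x\<^sub>m A \<inter> x\<^sub>n A = 0\<close> for \<open>m \<noteq> n\<close>; by nonsingularity each \<open>x\<^sub>n\<close> acts faithfully on a nonzero
  right ideal \<open>B\<^sub>n\<close>, and as there are no nonzero maps between disjoint submodules, \<open>B\<^sub>m A B\<^sub>n = 0\<close>.
  The ideals generated by the \<open>B\<^sub>n\<close> are then nonzero and pairwise orthogonal, hence independent in
  the semiprime ring \<open>A\<close>: an infinite direct sum of ideals.

  A maximal essential extension \<open>K\<close> of a uniform submodule is closed and uniform, so it is
  automorphism-invariant by hypothesis. Its injective hull \<open>E\<close> is uniform, hence for every
  endomorphism \<open>h\<close> of \<open>E\<close> either \<open>h\<close> or \<open>1 + h\<close> is injective (their kernels meet trivially) and so an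
  automorphism. Thus \<open>K\<close> is invariant under all endomorphisms of \<open>E\<close>, and extending maps into \<open>E\<close> by
  Baer's criterion shows that \<open>K\<close> is quasi-injective.
\<close>

text \<open>Interpreting the additive group below lets the HOL-Algebra group library act directly on
  \<open>madd\<close>, \<open>mzero\<close> and \<open>mneg\<close>.\<close>

definition add_group :: "('m, 'r) rmodule \<Rightarrow> 'm monoid" where
  "add_group M = \<lparr>carrier = mcarrier M, mult = madd M, one = mzero M\<rparr>"

definition mneg :: "('m, 'r) rmodule \<Rightarrow> 'm \<Rightarrow> 'm" where
  "mneg M = m_inv (add_group M)"

locale rmod =
  fixes A :: "('r, 'b) ring_scheme" and M :: "('m, 'r) rmodule"
  assumes rmodule: "rmodule A M"

sublocale rmod \<subseteq> A: ring A
  using rmodule unfolding rmodule_def by blast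

sublocale rmod \<subseteq> additive: comm_group "add_group M"
  rewrites "carrier (add_group M) = mcarrier M" and "mult (add_group M) = madd M"
    and "one (add_group M) = mzero M" and "m_inv (add_group M) = mneg M"
proof -
  show "comm_group (add_group M)"
    unfolding add_group_def
    by (rule comm_groupI; use rmodule in \<open>simp add: rmodule_def\<close>; metis)
qed (simp_all add: add_group_def mneg_def)

context rmod
begin

lemma mact_closed [simp]: "x \<in> mcarrier M \<Longrightarrow> a \<in> carrier A \<Longrightarrow> mact M x a \<in> mcarrier M"
  using rmodule unfolding rmodule_def by blast

lemma mact_madd:
  "x \<in> mcarrier M \<Longrightarrow> y \<in> mcarrier M \<Longrightarrow> a \<in> carrier A \<Longrightarrow>
   mact M (madd M x y) a = madd M (mact M x a) (mact M y a)"
  using rmodule unfolding rmodule_def by blast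

lemma mact_add:
  "x \<in> mcarrier M \<Longrightarrow> a \<in> carrier A \<Longrightarrow> b \<in> carrier A \<Longrightarrow>
   mact M x (a \<oplus>\<^bsub>A\<^esub> b) = madd M (mact M x a) (mact M x b)"
  using rmodule unfolding rmodule_def by blast

lemma mact_mult:
  "x \<in> mcarrier M \<Longrightarrow> a \<in> carrier A \<Longrightarrow> b \<in> carrier A \<Longrightarrow>
   mact M x (a \<otimes>\<^bsub>A\<^esub> b) = mact M (mact M x a) b"
  using rmodule unfolding rmodule_def by blast

lemma mact_one [simp]: "x \<in> mcarrier M \<Longrightarrow> mact M x \<one>\<^bsub>A\<^esub> = x"
  using rmodule unfolding rmodule_def by blast

lemma mact_zero [simp]: "x \<in> mcarrier M \<Longrightarrow> mact M x \<zero>\<^bsub>A\<^esub> = mzero M"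
  using mact_add[of x "\<zero>\<^bsub>A\<^esub>" "\<zero>\<^bsub>A\<^esub>"] by simp

lemma zero_mact [simp]: "a \<in> carrier A \<Longrightarrow> mact M (mzero M) a = mzero M"
  using mact_madd[of "mzero M" "mzero M" a] by simp

lemma mact_a_inv: "x \<in> mcarrier M \<Longrightarrow> a \<in> carrier A \<Longrightarrow> mact M x (\<ominus>\<^bsub>A\<^esub> a) = mneg M (mact M x a)"
  by (rule additive.inv_equality[symmetric]) (simp_all flip: mact_add add: A.l_neg)

lemma mact_minus_one: "x \<in> mcarrier M \<Longrightarrow> mact M x (\<ominus>\<^bsub>A\<^esub> \<one>\<^bsub>A\<^esub>) = mneg M x"
  by (simp add: mact_a_inv)

lemma madd_eq_madd_iff:
  assumes "u \<in> mcarrier M" "v \<in> mcarrier M" "u' \<in> mcarrier M" "v' \<in> mcarrier M"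
  shows "madd M u v = madd M u' v' \<longleftrightarrow> madd M v (mneg M v') = madd M u' (mneg M u)"
proof -
  have "madd M v (mneg M v') = madd M u' (mneg M u) \<longleftrightarrow> v = madd M (madd M u' (mneg M u)) v'"
    using assms by (simp add: additive.inv_solve_right')
  also have "\<dots> \<longleftrightarrow> v = madd M (mneg M u) (madd M u' v')"
    using assms by (simp add: additive.m_ac)
  also have "\<dots> \<longleftrightarrow> madd M u v = madd M u' v'"
    using assms by (auto simp add: additive.inv_solve_left)
  finally show ?thesis by simp
qed

lemma submodule_subset: "submodule A M N \<Longrightarrow> N \<subseteq> mcarrier M"
  unfolding submodule_def by blast

lemma submodule_zero: "submodule A M N \<Longrightarrow> mzero M \<in> N"
  unfolding submodule_def by blast

lemma submodule_madd: "submodule A M N \<Longrightarrow> x \<in> N \<Longrightarrow> y \<in> N \<Longrightarrow> madd M x y \<in> N"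
  unfolding submodule_def by blast

lemma submodule_mact: "submodule A M N \<Longrightarrow> x \<in> N \<Longrightarrow> a \<in> carrier A \<Longrightarrow> mact M x a \<in> N"
  unfolding submodule_def by blast

lemma submodule_mneg: "submodule A M N \<Longrightarrow> x \<in> N \<Longrightarrow> mneg M x \<in> N"
  by (metis A.add.inv_closed A.one_closed mact_minus_one submodule_mact submodule_subset subsetD)

lemma submodule_mcarrier: "submodule A M (mcarrier M)"
  unfolding submodule_def by simp

lemma submodule_zero_module: "submodule A M {mzero M}"
  unfolding submodule_def by simp

lemma submodule_Int: "submodule A M N \<Longrightarrow> submodule A M N' \<Longrightarrow> submodule A M (N \<inter> N')"
  unfolding submodule_def by blast

lemma submodule_nonzero_elem: "submodule A M N \<Longrightarrow> N \<noteq> {mzero M} \<Longrightarrow> \<exists>x\<in>N. x \<noteq> mzero M"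
  using submodule_zero by blast

end

lemma ne_singleton_mono: "X \<noteq> {z} \<Longrightarrow> z \<in> X \<Longrightarrow> X \<subseteq> Y \<Longrightarrow> Y \<noteq> {z}"
  by blast

lemma rhom_madd: "rhom A M S N T f \<Longrightarrow> x \<in> S \<Longrightarrow> y \<in> S \<Longrightarrow> f (madd M x y) = madd N (f x) (f y)"
  unfolding rhom_def by blast

lemma rhom_mact: "rhom A M S N T f \<Longrightarrow> x \<in> S \<Longrightarrow> a \<in> carrier A \<Longrightarrow> f (mact M x a) = mact N (f x) a"
  unfolding rhom_def by blast

lemma rhom_into: "rhom A M S N T f \<Longrightarrow> x \<in> S \<Longrightarrow> f x \<in> T"
  unfolding rhom_def by blast

lemma rhom_subset: "rhom A M S N T f \<Longrightarrow> S' \<subseteq> S \<Longrightarrow> rhom A M S' N T f"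
  unfolding rhom_def by blast

lemma rhom_retarget: "rhom A M S N T f \<Longrightarrow> f ` S \<subseteq> T' \<Longrightarrow> rhom A M S N T' f"
  unfolding rhom_def by blast

lemma rhom_comp: "rhom A M S N T f \<Longrightarrow> rhom A N T P U g \<Longrightarrow> rhom A M S P U (g \<circ> f)"
  unfolding rhom_def by (auto simp: Pi_iff)

lemma rhom_zero:
  assumes "rmodule A M" "rmodule A N" "submodule A M S" "T \<subseteq> mcarrier N" "rhom A M S N T f"
  shows "f (mzero M) = mzero N"
proof -
  interpret M: rmod A M by (rule rmod.intro) fact
  interpret N: rmod A N by (rule rmod.intro) fact
  have "mzero M \<in> S" using assms(3) by (rule M.submodule_zero)
  then have "madd N (f (mzero M)) (f (mzero M)) = f (mzero M)" "f (mzero M) \<in> mcarrier N"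
    using rhom_madd[OF assms(5)] rhom_into[OF assms(5)] assms(4) by (force, blast)
  then show ?thesis by simp
qed

lemma rhom_mneg:
  assumes "rmodule A M" "rmodule A N" "S \<subseteq> mcarrier M" "T \<subseteq> mcarrier N" "rhom A M S N T f"
    and "x \<in> S"
  shows "f (mneg M x) = mneg N (f x)"
proof -
  interpret M: rmod A M by (rule rmod.intro) fact
  interpret N: rmod A N by (rule rmod.intro) fact
  have "x \<in> mcarrier M" "f x \<in> mcarrier N"
    using assms rhom_into[OF assms(5,6)] by blast+
  then show ?thesis
    using rhom_mact[OF assms(5,6), of "\<ominus>\<^bsub>A\<^esub> \<one>\<^bsub>A\<^esub>"] by (simp add: M.mact_minus_one N.mact_minus_one)
qed

lemma rhom_inv_into:
  assumes S: "submodule A M S" and f: "rhom A M S N T f" and inj: "inj_on f S"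
  shows "rhom A N (f ` S) M S (inv_into S f)"
  unfolding rhom_def
proof (intro conjI ballI)
  show "inv_into S f \<in> f ` S \<rightarrow> S"
    using inj by auto
  show "inv_into S f (madd N u v) = madd M (inv_into S f u) (inv_into S f v)" if uv: "u \<in> f ` S" "v \<in> f ` S" for u v
  proof -
    obtain x y where "x \<in> S" "y \<in> S" "u = f x" "v = f y" using uv by blast
    moreover have "madd M x y \<in> S" using calculation S unfolding submodule_def by blast
    ultimately show ?thesis using inj rhom_madd[OF f] by (metis inv_into_f_f)
  qed
  show "inv_into S f (mact N u a) = mact M (inv_into S f u) a" if ua: "u \<in> f ` S" "a \<in> carrier A" for u a
  proof -
    obtain x where "x \<in> S" "u = f x" using ua by blast
    moreover have "mact M x a \<in> S" using calculation ua S unfolding submodule_def by blast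
    ultimately show ?thesis using inj rhom_mact[OF f] ua by (metis inv_into_f_f)
  qed
qed

lemma submodule_image:
  assumes "rmodule A M" "rmodule A N" "submodule A M S" "T \<subseteq> mcarrier N" "rhom A M S N T f"
  shows "submodule A N (f ` S)"
proof -
  interpret M: rmod A M by (rule rmod.intro) fact
  have "mzero N \<in> f ` S"
    using rhom_zero[OF assms] M.submodule_zero[OF assms(3)] by (metis image_eqI)
  moreover have "madd N (f x) (f y) \<in> f ` S" if "x \<in> S" "y \<in> S" for x y
    using that rhom_madd[OF assms(5)] M.submodule_madd[OF assms(3)] by (metis image_eqI)
  moreover have "mact N (f x) a \<in> f ` S" if "x \<in> S" "a \<in> carrier A" for x a
    using that rhom_mact[OF assms(5)] M.submodule_mact[OF assms(3)] by (metis image_eqI)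
  ultimately show ?thesis
    using assms(4) rhom_into[OF assms(5)] unfolding submodule_def by blast
qed

lemma submodule_preimage:
  assumes "rmodule A M" "rmodule A N" "submodule A M S" "T \<subseteq> mcarrier N" "rhom A M S N T f"
    and "submodule A N V"
  shows "submodule A M {x \<in> S. f x \<in> V}"
proof -
  interpret M: rmod A M by (rule rmod.intro) fact
  interpret N: rmod A N by (rule rmod.intro) fact
  have "mzero M \<in> S" "f (mzero M) \<in> V"
    using rhom_zero[OF assms(1-5)] M.submodule_zero[OF assms(3)] N.submodule_zero[OF assms(6)] by simp_all
  then show ?thesis
    unfolding submodule_def
    using M.submodule_subset[OF assms(3)] M.submodule_madd[OF assms(3)] M.submodule_mact[OF assms(3)]
      N.submodule_madd[OF assms(6)] N.submodule_mact[OF assms(6)] rhom_madd[OF assms(5)] rhom_mact[OF assms(5)]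
    by auto
qed

lemma regular_rmodule_simps [simp]:
  "mcarrier (regular_rmodule A) = carrier A" "madd (regular_rmodule A) = add A"
  "mzero (regular_rmodule A) = zero A" "mact (regular_rmodule A) = mult A"
  by (simp_all add: regular_rmodule_def)

lemma rmodule_regular_rmodule:
  assumes "ring A"
  shows "rmodule A (regular_rmodule A)"
proof -
  interpret ring A by fact
  show ?thesis
    unfolding rmodule_def regular_rmodule_def
    by (simp add: ring_axioms a_ac m_assoc l_distr r_distr)
qed

lemma rhom_left_mult:
  assumes "ring A" "c \<in> carrier A"
  shows "rhom A (regular_rmodule A) (carrier A) (regular_rmodule A) (carrier A) (\<lambda>a. c \<otimes>\<^bsub>A\<^esub> a)"
proof -
  interpret ring A by fact
  show ?thesis
    using assms(2) unfolding rhom_def by (simp add: r_distr m_assoc)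
qed

context rmod
begin

lemma rhom_mact_elem: "x \<in> mcarrier M \<Longrightarrow> rhom A (regular_rmodule A) (carrier A) M (mcarrier M) (mact M x)"
  unfolding rhom_def by (simp add: mact_add mact_mult)

lemma submodule_kernel:
  assumes "rhom A M (mcarrier M) M (mcarrier M) h"
  shows "submodule A M {x \<in> mcarrier M. h x = mzero M}"
  using submodule_preimage[OF rmodule rmodule submodule_mcarrier subset_refl assms submodule_zero_module]
  by simp

lemma inj_on_iff_kernel:
  assumes h: "rhom A M (mcarrier M) M (mcarrier M) h"
  shows "inj_on h (mcarrier M) \<longleftrightarrow> {x \<in> mcarrier M. h x = mzero M} = {mzero M}"
proof
  have h0: "h (mzero M) = mzero M"
    using rhom_zero[OF rmodule rmodule submodule_mcarrier subset_refl h] .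
  then show "inj_on h (mcarrier M) \<Longrightarrow> {x \<in> mcarrier M. h x = mzero M} = {mzero M}"
    by (auto intro: inj_onD[of h _ _ "mzero M"])
  assume ker: "{x \<in> mcarrier M. h x = mzero M} = {mzero M}"
  show "inj_on h (mcarrier M)"
  proof (rule inj_onI)
    fix x y assume xy: "x \<in> mcarrier M" "y \<in> mcarrier M" "h x = h y"
    have "h (madd M x (mneg M y)) = madd M (h x) (h (mneg M y))"
      using xy by (intro rhom_madd[OF h]) simp_all
    also have "h (mneg M y) = mneg M (h y)"
      using xy by (intro rhom_mneg[OF rmodule rmodule subset_refl subset_refl h])
    finally have "h (madd M x (mneg M y)) = mzero M"
      using xy rhom_into[OF h] by simp
    then have "madd M x (mneg M y) = mzero M"
      using ker xy by blast
    then show "x = y"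
      using xy by (simp add: additive.inv_solve_right')
  qed
qed

end

section \<open>Baer's criterion extends homomorphisms\<close>

lemma subset_chain_Union_common:
  assumes "subset.chain \<A> C" "p \<in> \<Union>C" "q \<in> \<Union>C"
  shows "\<exists>B\<in>C. p \<in> B \<and> q \<in> B"
proof -
  have "finite {p, q}" "{p, q} \<subseteq> \<Union>C" "C \<noteq> {}"
    using assms(2,3) by auto
  then obtain B where "B \<in> C" "{p, q} \<subseteq> B"
    using finite_subset_Union_chain assms(1) by metis
  then show ?thesis by blast
qed

context rmod
begin

text \<open>Partial linear maps are represented by their graphs, so that Zorn's lemma for \<open>\<subseteq>\<close> applies.\<close>
definition linear_graph :: "('m \<times> 'm) set \<Rightarrow> bool" where
  "linear_graph G \<longleftrightarrow> G \<subseteq> mcarrier M \<times> mcarrier M \<and> single_valued G \<and>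
     (\<forall>x y x' y'. (x, y) \<in> G \<longrightarrow> (x', y') \<in> G \<longrightarrow> (madd M x x', madd M y y') \<in> G) \<and>
     (\<forall>x y a. (x, y) \<in> G \<longrightarrow> a \<in> carrier A \<longrightarrow> (mact M x a, mact M y a) \<in> G)"

lemma linear_graphD:
  assumes "linear_graph G"
  shows linear_graph_mcarrier: "(x, y) \<in> G \<Longrightarrow> x \<in> mcarrier M \<and> y \<in> mcarrier M"
    and linear_graph_unique: "(x, y) \<in> G \<Longrightarrow> (x, y') \<in> G \<Longrightarrow> y = y'"
    and linear_graph_madd: "(x, y) \<in> G \<Longrightarrow> (x', y') \<in> G \<Longrightarrow> (madd M x x', madd M y y') \<in> G"
    and linear_graph_mact: "(x, y) \<in> G \<Longrightarrow> a \<in> carrier A \<Longrightarrow> (mact M x a, mact M y a) \<in> G"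
  using assms unfolding linear_graph_def single_valued_def by blast+

lemma linear_graph_mneg: "linear_graph G \<Longrightarrow> (x, y) \<in> G \<Longrightarrow> (mneg M x, mneg M y) \<in> G"
  using linear_graph_mact[of G x y "\<ominus>\<^bsub>A\<^esub> \<one>\<^bsub>A\<^esub>"] linear_graph_mcarrier[of G x y]
  by (simp add: mact_minus_one)

lemma linear_graph_zero: "linear_graph G \<Longrightarrow> G \<noteq> {} \<Longrightarrow> (mzero M, mzero M) \<in> G"
  using linear_graph_mact[of G _ _ "\<zero>\<^bsub>A\<^esub>"] linear_graph_mcarrier[of G] by fastforce

lemma linear_graph_the: "linear_graph G \<Longrightarrow> (x, y) \<in> G \<Longrightarrow> (THE y. (x, y) \<in> G) = y"
  using linear_graph_unique by blast

lemma rhom_linear_graph: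
  assumes G: "linear_graph G" and dom: "Domain G = mcarrier M"
  shows "rhom A M (mcarrier M) M (mcarrier M) (\<lambda>x. THE y. (x, y) \<in> G)"
proof -
  have graph: "(x, THE y. (x, y) \<in> G) \<in> G" if "x \<in> mcarrier M" for x
    using that dom linear_graph_the[OF G] by (metis DomainE)
  show ?thesis
    unfolding rhom_def
  proof (intro conjI ballI)
    show "(\<lambda>x. THE y. (x, y) \<in> G) \<in> mcarrier M \<rightarrow> mcarrier M"
      using graph linear_graph_mcarrier[OF G] by blast
    show "(THE z. (madd M x y, z) \<in> G) = madd M (THE z. (x, z) \<in> G) (THE z. (y, z) \<in> G)"
      if "x \<in> mcarrier M" "y \<in> mcarrier M" for x y
      using that by (intro linear_graph_the[OF G] linear_graph_madd[OF G] graph)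
    show "(THE z. (mact M x a, z) \<in> G) = mact M (THE z. (x, z) \<in> G) a"
      if "x \<in> mcarrier M" "a \<in> carrier A" for x a
      using that by (intro linear_graph_the[OF G] linear_graph_mact[OF G] graph)
  qed
qed

lemma submodule_Domain_linear_graph:
  assumes "linear_graph G" "G \<noteq> {}"
  shows "submodule A M (Domain G)"
  unfolding submodule_def
  using assms linear_graph_zero linear_graph_mcarrier linear_graph_madd linear_graph_mact by blast

lemma linear_graph_Union_chain:
  assumes "subset.chain \<G> C" "\<And>G. G \<in> C \<Longrightarrow> linear_graph G"
  shows "linear_graph (\<Union>C)"
  unfolding linear_graph_def single_valued_def
proof (intro conjI allI impI)
  note common = subset_chain_Union_common[OF assms(1)]
  show "\<Union>C \<subseteq> mcarrier M \<times> mcarrier M"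
    using assms(2) linear_graph_mcarrier by fast
  show "y = y'" if "(x, y) \<in> \<Union>C" "(x, y') \<in> \<Union>C" for x y y'
    using common[OF that] by (metis assms(2) linear_graph_unique)
  show "(madd M x x', madd M y y') \<in> \<Union>C" if "(x, y) \<in> \<Union>C" "(x', y') \<in> \<Union>C" for x y x' y'
    using common[OF that] by (metis UnionI assms(2) linear_graph_madd)
  show "(mact M x a, mact M y a) \<in> \<Union>C" if "(x, y) \<in> \<Union>C" "a \<in> carrier A" for x y a
    using that by (metis UnionE UnionI assms(2) linear_graph_mact)
qed

definition graph_adjoin :: "('m \<times> 'm) set \<Rightarrow> 'm \<Rightarrow> 'm \<Rightarrow> ('m \<times> 'm) set" where
  "graph_adjoin G x e =
     {(madd M d (mact M x a), madd M y (mact M e a)) | d y a. (d, y) \<in> G \<and> a \<in> carrier A}"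

lemma graph_adjoin_mcarrier:
  "linear_graph G \<Longrightarrow> x \<in> mcarrier M \<Longrightarrow> e \<in> mcarrier M \<Longrightarrow>
   graph_adjoin G x e \<subseteq> mcarrier M \<times> mcarrier M"
  unfolding graph_adjoin_def using linear_graph_mcarrier by auto

lemma subset_graph_adjoin:
  assumes G: "linear_graph G" and x: "x \<in> mcarrier M" and e: "e \<in> mcarrier M"
  shows "G \<subseteq> graph_adjoin G x e"
proof clarify
  fix d y assume "(d, y) \<in> G"
  then show "(d, y) \<in> graph_adjoin G x e"
    unfolding graph_adjoin_def using linear_graph_mcarrier[OF G] x e
    by (intro CollectI exI[of _ d] exI[of _ y] exI[of _ "\<zero>\<^bsub>A\<^esub>"]) simp
qed

lemma Domain_graph_adjoin:
  assumes G: "linear_graph G" "G \<noteq> {}" and x: "x \<in> mcarrier M" and e: "e \<in> mcarrier M"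
  shows "x \<in> Domain (graph_adjoin G x e)"
proof -
  have "(madd M (mzero M) (mact M x \<one>\<^bsub>A\<^esub>), madd M (mzero M) (mact M e \<one>\<^bsub>A\<^esub>)) \<in> graph_adjoin G x e"
    unfolding graph_adjoin_def using linear_graph_zero[OF G] by blast
  then show ?thesis
    using x e by auto
qed

text \<open>Well-definedness: if \<open>d + x a = d' + x a'\<close> then \<open>x (a - a') = d' - d\<close> lies in the domain of \<open>G\<close>,
  so compatibility forces \<open>e (a - a') = y' - y\<close>.\<close>
lemma single_valued_graph_adjoin:
  assumes G: "linear_graph G" and x: "x \<in> mcarrier M" and e: "e \<in> mcarrier M"
    and compatible: "\<And>a y. a \<in> carrier A \<Longrightarrow> (mact M x a, y) \<in> G \<Longrightarrow> y = mact M e a"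
  shows "single_valued (graph_adjoin G x e)"
  unfolding graph_adjoin_def
proof (rule single_valuedI, clarify)
  note Gc = linear_graph_mcarrier[OF G]
  fix d y a d' y' a'
  assume dy: "(d, y) \<in> G" "(d', y') \<in> G" and a: "a \<in> carrier A" "a' \<in> carrier A"
    and eq: "madd M d (mact M x a) = madd M d' (mact M x a')"
  have "mact M x (a \<ominus>\<^bsub>A\<^esub> a') = madd M d' (mneg M d)"
    using eq dy a x Gc madd_eq_madd_iff[of d "mact M x a" d' "mact M x a'"]
    by (simp add: A.minus_eq mact_add mact_a_inv)
  moreover have "(madd M d' (mneg M d), madd M y' (mneg M y)) \<in> G"
    using dy G by (simp add: linear_graph_madd linear_graph_mneg)
  ultimately have "madd M y' (mneg M y) = mact M e (a \<ominus>\<^bsub>A\<^esub> a')"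
    using compatible a by simp
  then show "madd M y (mact M e a) = madd M y' (mact M e a')"
    using dy a e Gc madd_eq_madd_iff[of y "mact M e a" y' "mact M e a'"]
    by (simp add: A.minus_eq mact_add mact_a_inv)
qed

lemma linear_graph_adjoin:
  assumes G: "linear_graph G" and x: "x \<in> mcarrier M" and e: "e \<in> mcarrier M"
    and compatible: "\<And>a y. a \<in> carrier A \<Longrightarrow> (mact M x a, y) \<in> G \<Longrightarrow> y = mact M e a"
  shows "linear_graph (graph_adjoin G x e)"
  unfolding linear_graph_def
proof (intro conjI allI impI)
  note Gc = linear_graph_mcarrier[OF G]
  show "graph_adjoin G x e \<subseteq> mcarrier M \<times> mcarrier M"
    using graph_adjoin_mcarrier[OF G x e] .
  show "single_valued (graph_adjoin G x e)"
    using single_valued_graph_adjoin[OF G x e compatible] .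
  show "(madd M u u', madd M v v') \<in> graph_adjoin G x e"
    if mem: "(u, v) \<in> graph_adjoin G x e" "(u', v') \<in> graph_adjoin G x e" for u v u' v'
  proof -
    obtain d y a d' y' a' where dy: "(d, y) \<in> G" "(d', y') \<in> G" and a: "a \<in> carrier A" "a' \<in> carrier A"
      and uv: "u = madd M d (mact M x a)" "v = madd M y (mact M e a)"
        "u' = madd M d' (mact M x a')" "v' = madd M y' (mact M e a')"
      using mem unfolding graph_adjoin_def by blast
    have shuffle: "madd M (madd M p (mact M z a)) (madd M p' (mact M z a')) =
        madd M (madd M p p') (mact M z (a \<oplus>\<^bsub>A\<^esub> a'))"
      if "p \<in> mcarrier M" "p' \<in> mcarrier M" "z \<in> mcarrier M" for p p' z
      using that a by (simp add: mact_add additive.m_ac)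
    have "(madd M d d', madd M y y') \<in> G" "a \<oplus>\<^bsub>A\<^esub> a' \<in> carrier A"
      using dy a G by (simp_all add: linear_graph_madd)
    then show ?thesis
      unfolding graph_adjoin_def using uv dy Gc x e by (simp add: shuffle, blast)
  qed
  show "(mact M u c, mact M v c) \<in> graph_adjoin G x e"
    if mem: "(u, v) \<in> graph_adjoin G x e" and c: "c \<in> carrier A" for u v c
  proof -
    obtain d y a where dy: "(d, y) \<in> G" and a: "a \<in> carrier A"
      and uv: "u = madd M d (mact M x a)" "v = madd M y (mact M e a)"
      using mem unfolding graph_adjoin_def by blast
    have "(mact M d c, mact M y c) \<in> G" "a \<otimes>\<^bsub>A\<^esub> c \<in> carrier A"
      using dy a c G by (simp_all add: linear_graph_mact)
    then show ?thesis
      unfolding graph_adjoin_def using uv dy Gc x e a c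
      by (intro CollectI exI[of _ "mact M d c"] exI[of _ "mact M y c"] exI[of _ "a \<otimes>\<^bsub>A\<^esub> c"])
        (simp add: mact_madd mact_mult)
  qed
qed

text \<open>Baer's criterion, applied to the right ideal of those \<open>a\<close> with \<open>x a\<close> in the domain of \<open>G\<close>,
  supplies a compatible value \<open>e\<close> at \<open>x\<close>.\<close>
lemma linear_graph_extend:
  assumes baer: "baer_injective A M" and G: "linear_graph G" "G \<noteq> {}" and x: "x \<in> mcarrier M"
  shows "\<exists>G'. linear_graph G' \<and> G \<subseteq> G' \<and> x \<in> Domain G'"
proof -
  define I where "I = {a \<in> carrier A. mact M x a \<in> Domain G}"
  define f where "f a = (THE y. (mact M x a, y) \<in> G)" for a
  have fG: "(mact M x a, f a) \<in> G" if "a \<in> I" for a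
    using that linear_graph_the[OF G(1)] unfolding I_def f_def by auto
  have I: "right_ideal A I"
  proof -
    interpret R: rmod A "regular_rmodule A"
      by (rule rmod.intro, rule rmodule_regular_rmodule, rule A.ring_axioms)
    show ?thesis
      using submodule_preimage[OF R.rmodule rmodule R.submodule_mcarrier[simplified] _ rhom_mact_elem[OF x]
          submodule_Domain_linear_graph[OF G]]
      unfolding right_ideal_def I_def by simp
  qed
  have "rhom A (regular_rmodule A) I M (mcarrier M) f"
    unfolding rhom_def
  proof (simp, intro conjI ballI)
    show "f \<in> I \<rightarrow> mcarrier M"
      using fG linear_graph_mcarrier[OF G(1)] by blast
    show "f (a \<oplus>\<^bsub>A\<^esub> b) = madd M (f a) (f b)" if "a \<in> I" "b \<in> I" for a b
      using that x linear_graph_madd[OF G(1) fG fG] linear_graph_the[OF G(1)]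
      unfolding I_def by (simp add: mact_add f_def)
    show "f (a \<otimes>\<^bsub>A\<^esub> c) = mact M (f a) c" if "a \<in> I" "c \<in> carrier A" for a c
      using that x linear_graph_mact[OF G(1) fG] linear_graph_the[OF G(1)]
      unfolding I_def by (simp add: mact_mult f_def)
  qed
  then obtain e where e: "e \<in> mcarrier M" "\<And>a. a \<in> I \<Longrightarrow> f a = mact M e a"
    using baer I unfolding baer_injective_def by blast
  have compatible: "y = mact M e a" if "a \<in> carrier A" "(mact M x a, y) \<in> G" for a y
    using that e(2) linear_graph_the[OF G(1)] unfolding I_def f_def by blast
  show ?thesis
    using linear_graph_adjoin[OF G(1) x e(1) compatible] subset_graph_adjoin[OF G(1) x e(1)]
      Domain_graph_adjoin[OF G x e(1)] by blast
qed

lemma linear_graph_rhom: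
  assumes N: "submodule A M N" and \<phi>: "rhom A M N M (mcarrier M) \<phi>"
  shows "linear_graph ((\<lambda>x. (x, \<phi> x)) ` N)"
  unfolding linear_graph_def single_valued_def
proof (intro conjI allI impI)
  show "(\<lambda>x. (x, \<phi> x)) ` N \<subseteq> mcarrier M \<times> mcarrier M"
    using submodule_subset[OF N] rhom_into[OF \<phi>] by blast
  show "(madd M x x', madd M y y') \<in> (\<lambda>x. (x, \<phi> x)) ` N"
    if "(x, y) \<in> (\<lambda>x. (x, \<phi> x)) ` N" "(x', y') \<in> (\<lambda>x. (x, \<phi> x)) ` N" for x y x' y'
    using that submodule_madd[OF N] rhom_madd[OF \<phi>] by auto
  show "(mact M x a, mact M y a) \<in> (\<lambda>x. (x, \<phi> x)) ` N"
    if "(x, y) \<in> (\<lambda>x. (x, \<phi> x)) ` N" "a \<in> carrier A" for x y a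
    using that submodule_mact[OF N] rhom_mact[OF \<phi>] by auto
qed auto

lemma baer_injective_extend:
  assumes baer: "baer_injective A M" and N: "submodule A M N"
    and \<phi>: "rhom A M N M (mcarrier M) \<phi>"
  shows "\<exists>h. rhom A M (mcarrier M) M (mcarrier M) h \<and> (\<forall>x\<in>N. h x = \<phi> x)"
proof -
  let ?graph = "(\<lambda>x. (x, \<phi> x)) ` N"
  let ?\<G> = "{G. linear_graph G \<and> ?graph \<subseteq> G}"
  have "\<exists>G\<in>?\<G>. \<forall>G'\<in>?\<G>. G \<subseteq> G' \<longrightarrow> G' = G"
  proof (intro subset_Zorn_nonempty)
    fix C assume C: "C \<noteq> {}" "subset.chain ?\<G> C"
    then have "C \<subseteq> ?\<G>"
      by (simp add: subset_chain_def)
    then show "\<Union>C \<in> ?\<G>"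
      using linear_graph_Union_chain[OF C(2)] C(1) by blast
  qed (use linear_graph_rhom[OF N \<phi>] in blast)
  then obtain G where "G \<in> ?\<G>" and max: "\<forall>G'\<in>?\<G>. G \<subseteq> G' \<longrightarrow> G' = G" ..
  then have G: "linear_graph G" "?graph \<subseteq> G" by simp_all
  have "G \<noteq> {}"
    using G(2) submodule_zero[OF N] by blast
  have "Domain G = mcarrier M"
  proof
    show "Domain G \<subseteq> mcarrier M"
      using linear_graph_mcarrier[OF G(1)] by blast
    show "mcarrier M \<subseteq> Domain G"
    proof
      fix x assume "x \<in> mcarrier M"
      then obtain G' where "linear_graph G'" "G \<subseteq> G'" "x \<in> Domain G'"
        using linear_graph_extend[OF baer G(1) \<open>G \<noteq> {}\<close>] by blast
      then show "x \<in> Domain G"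
        using max G(2) by blast
    qed
  qed
  then show ?thesis
    using rhom_linear_graph[OF G(1)] linear_graph_the[OF G(1)] G(2) by blast
qed

section \<open>Uniform injective modules\<close>

lemma uniformD:
  assumes "uniform A M X" "submodule A M U" "submodule A M V" "U \<subseteq> X" "V \<subseteq> X" "U \<inter> V = {mzero M}"
  shows "U = {mzero M} \<or> V = {mzero M}"
proof -
  have "\<forall>U V. submodule A M U \<and> submodule A M V \<and> U \<subseteq> X \<and> V \<subseteq> X \<and>
      U \<noteq> {mzero M} \<and> V \<noteq> {mzero M} \<longrightarrow> U \<inter> V \<noteq> {mzero M}"
    using assms(1) unfolding uniform_def by (rule conjunct2)
  then show ?thesis
    using assms(2-6) by meson
qed

lemma rhom_id_plus:
  assumes h: "rhom A M (mcarrier M) M (mcarrier M) h"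
  shows "rhom A M (mcarrier M) M (mcarrier M) (\<lambda>x. madd M x (h x))"
  unfolding rhom_def
proof (intro conjI ballI)
  show "(\<lambda>x. madd M x (h x)) \<in> mcarrier M \<rightarrow> mcarrier M"
    using rhom_into[OF h] by simp
  show "madd M (madd M x y) (h (madd M x y)) = madd M (madd M x (h x)) (madd M y (h y))"
    if "x \<in> mcarrier M" "y \<in> mcarrier M" for x y
    using that rhom_into[OF h, of x] rhom_into[OF h, of y] rhom_madd[OF h that]
    by (simp add: additive.m_ac)
  show "madd M (mact M x a) (h (mact M x a)) = mact M (madd M x (h x)) a"
    if "x \<in> mcarrier M" "a \<in> carrier A" for x a
    using that rhom_into[OF h, of x] rhom_mact[OF h that] by (simp add: mact_madd)
qed

lemma uniform_inj_or_inj_id_plus: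
  assumes unif: "uniform A M (mcarrier M)" and h: "rhom A M (mcarrier M) M (mcarrier M) h"
  shows "inj_on h (mcarrier M) \<or> inj_on (\<lambda>x. madd M x (h x)) (mcarrier M)"
proof -
  have "{x \<in> mcarrier M. h x = mzero M} \<inter> {x \<in> mcarrier M. madd M x (h x) = mzero M} = {mzero M}"
    using rhom_zero[OF rmodule rmodule submodule_mcarrier subset_refl h] by auto
  then show ?thesis
    using uniformD[OF unif submodule_kernel[OF h] submodule_kernel[OF rhom_id_plus[OF h]]]
    by (simp add: inj_on_iff_kernel[OF h] inj_on_iff_kernel[OF rhom_id_plus[OF h]])
qed

lemma baer_injective_inj_endo_left_inverse:
  assumes baer: "baer_injective A M"
    and h: "rhom A M (mcarrier M) M (mcarrier M) h" and inj: "inj_on h (mcarrier M)"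
  shows "\<exists>q. rhom A M (mcarrier M) M (mcarrier M) q \<and> (\<forall>x\<in>mcarrier M. q (h x) = x)"
proof -
  have "submodule A M (h ` mcarrier M)"
    using submodule_image[OF rmodule rmodule submodule_mcarrier subset_refl h] .
  then obtain q where "rhom A M (mcarrier M) M (mcarrier M) q"
    and "\<forall>y\<in>h ` mcarrier M. q y = inv_into (mcarrier M) h y"
    using baer_injective_extend[OF baer _ rhom_inv_into[OF submodule_mcarrier h inj]] by blast
  then show ?thesis
    using inj by auto
qed

text \<open>With \<open>q h = 1\<close>, the kernel of \<open>q\<close> meets the nonzero image of \<open>h\<close> trivially, so it is zero by
  uniformity; hence \<open>y = h (q y)\<close> for all \<open>y\<close>.\<close>
lemma uniform_injective_inj_endo_rautomorphism:
  assumes baer: "baer_injective A M" and unif: "uniform A M (mcarrier M)"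
    and h: "rhom A M (mcarrier M) M (mcarrier M) h" and inj: "inj_on h (mcarrier M)"
  shows "rautomorphism A M h"
proof -
  obtain q where q: "rhom A M (mcarrier M) M (mcarrier M) q" and qh: "\<And>x. x \<in> mcarrier M \<Longrightarrow> q (h x) = x"
    using baer_injective_inj_endo_left_inverse[OF baer h inj] by blast
  have h0: "h (mzero M) = mzero M"
    using rhom_zero[OF rmodule rmodule submodule_mcarrier subset_refl h] .
  have "{y \<in> mcarrier M. q y = mzero M} \<inter> h ` mcarrier M = {mzero M}"
    using qh h0 by force
  moreover obtain x where "x \<in> mcarrier M" "x \<noteq> mzero M"
    using unif submodule_nonzero_elem[OF submodule_mcarrier] unfolding uniform_def by blast
  then have "h ` mcarrier M \<noteq> {mzero M}"
    using h0 inj by (metis additive.one_closed imageI inj_on_def singletonD)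
  ultimately have ker_q: "{y \<in> mcarrier M. q y = mzero M} = {mzero M}"
    using uniformD[OF unif submodule_kernel[OF q]
        submodule_image[OF rmodule rmodule submodule_mcarrier subset_refl h]] rhom_into[OF h] by blast
  have "y \<in> h ` mcarrier M" if y: "y \<in> mcarrier M" for y
  proof -
    have hqy: "h (q y) \<in> mcarrier M"
      using y rhom_into[OF h] rhom_into[OF q] by blast
    have "q (madd M y (mneg M (h (q y)))) = madd M (q y) (mneg M (q (h (q y))))"
      using y hqy rhom_madd[OF q] rhom_mneg[OF rmodule rmodule subset_refl subset_refl q] by simp
    also have "\<dots> = mzero M"
      using y rhom_into[OF q] qh by simp
    finally have "madd M y (mneg M (h (q y))) = mzero M"
      using ker_q y hqy by blast
    then have "y = h (q y)"
      using y hqy by (simp add: additive.inv_solve_right')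
    then show ?thesis
      using y rhom_into[OF q] by blast
  qed
  then have "h ` mcarrier M = mcarrier M"
    using rhom_into[OF h] by blast
  then show ?thesis
    unfolding rautomorphism_def bij_betw_def using h inj by blast
qed

text \<open>If \<open>h\<close> is not an automorphism then \<open>1 + h\<close> is one, and \<open>h = (1 + h) - 1\<close>.\<close>
lemma fully_invariant_if_aut_invariant:
  assumes baer: "baer_injective A M" and unif: "uniform A M (mcarrier M)"
    and N: "submodule A M N" and inv: "\<And>\<sigma>. rautomorphism A M \<sigma> \<Longrightarrow> \<sigma> ` N \<subseteq> N"
    and h: "rhom A M (mcarrier M) M (mcarrier M) h"
  shows "h ` N \<subseteq> N"
proof (cases "inj_on h (mcarrier M)")
  case True
  then show ?thesis
    using inv uniform_injective_inj_endo_rautomorphism[OF baer unif h] by blast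
next
  case False
  let ?\<sigma> = "\<lambda>x. madd M x (h x)"
  have "inj_on ?\<sigma> (mcarrier M)"
    using False uniform_inj_or_inj_id_plus[OF unif h] by blast
  then have \<sigma>N: "?\<sigma> ` N \<subseteq> N"
    using inv uniform_injective_inj_endo_rautomorphism[OF baer unif rhom_id_plus[OF h]] by blast
  show ?thesis
  proof
    fix y assume "y \<in> h ` N"
    then obtain n where n: "n \<in> N" "y = h n" by blast
    then have nM: "n \<in> mcarrier M" "h n \<in> mcarrier M"
      using submodule_subset[OF N] rhom_into[OF h] by blast+
    then have "y = madd M (?\<sigma> n) (mneg M n)"
      using n by (simp add: additive.m_assoc additive.m_lcomm[of n "h n"])
    then show "y \<in> N"
      using n \<sigma>N submodule_madd[OF N] submodule_mneg[OF N] by blast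
  qed
qed

lemma essential_inD:
  assumes "essential_in A M U K" "submodule A M W" "W \<subseteq> K" "W \<noteq> {mzero M}"
  shows "W \<inter> U \<noteq> {mzero M}"
proof -
  have "\<forall>W. submodule A M W \<and> W \<subseteq> K \<and> W \<noteq> {mzero M} \<longrightarrow> W \<inter> U \<noteq> {mzero M}"
    using assms(1) unfolding essential_in_def by (elim conjE)
  then show ?thesis
    using assms(2-4) by meson
qed

lemma essential_in_refl: "submodule A M U \<Longrightarrow> essential_in A M U U"
  unfolding essential_in_def by (auto simp: Int_absorb2)

lemma essential_in_trans:
  assumes UK: "essential_in A M U K" and KZ: "essential_in A M K Z"
  shows "essential_in A M U Z"
  unfolding essential_in_def
proof (intro conjI allI impI)
  have K: "submodule A M K" "U \<subseteq> K" and U: "submodule A M U"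
    using UK unfolding essential_in_def by blast+
  show "submodule A M U" "submodule A M Z" "U \<subseteq> Z"
    using UK KZ unfolding essential_in_def by blast+
  fix W assume W: "submodule A M W \<and> W \<subseteq> Z \<and> W \<noteq> {mzero M}"
  then have "W \<inter> K \<noteq> {mzero M}"
    using essential_inD[OF KZ] by blast
  then have "(W \<inter> K) \<inter> U \<noteq> {mzero M}"
    using essential_inD[OF UK submodule_Int[OF _ K(1)]] W by blast
  then show "W \<inter> U \<noteq> {mzero M}"
    by (rule ne_singleton_mono) (use submodule_zero[OF W[THEN conjunct1]] submodule_zero[OF K(1)] submodule_zero[OF U] in auto)
qed

lemma uniform_essential_extension:
  assumes UK: "essential_in A M U K" and U: "uniform A M U"
  shows "uniform A M K"
  unfolding uniform_def
proof (intro conjI allI impI)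
  have sub: "submodule A M U" "U \<subseteq> K"
    using UK unfolding essential_in_def by blast+
  have "U \<noteq> {mzero M}"
    using U unfolding uniform_def by (rule conjunct1)
  then show "K \<noteq> {mzero M}"
    by (rule ne_singleton_mono[OF _ submodule_zero[OF sub(1)] sub(2)])
  fix V W assume VW: "submodule A M V \<and> submodule A M W \<and> V \<subseteq> K \<and> W \<subseteq> K \<and> V \<noteq> {mzero M} \<and> W \<noteq> {mzero M}"
  then have "V \<inter> U \<noteq> {mzero M}" "W \<inter> U \<noteq> {mzero M}"
    using essential_inD[OF UK] by blast+
  then have "(V \<inter> U) \<inter> (W \<inter> U) \<noteq> {mzero M}"
    using uniformD[OF U submodule_Int submodule_Int] VW sub by blast
  then show "V \<inter> W \<noteq> {mzero M}"
    by (rule ne_singleton_mono) (use VW submodule_zero sub in auto)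
qed

lemma submodule_Union_chain:
  assumes "subset.chain \<K> C" "C \<noteq> {}" "\<And>K. K \<in> C \<Longrightarrow> submodule A M K"
  shows "submodule A M (\<Union>C)"
  unfolding submodule_def
proof (intro conjI ballI)
  show "\<Union>C \<subseteq> mcarrier M" "mzero M \<in> \<Union>C"
    using assms(2,3) submodule_subset submodule_zero by blast+
  show "madd M x y \<in> \<Union>C" if "x \<in> \<Union>C" "y \<in> \<Union>C" for x y
    using subset_chain_Union_common[OF assms(1) that] assms(3) submodule_madd by blast
  show "mact M x a \<in> \<Union>C" if "x \<in> \<Union>C" "a \<in> carrier A" for x a
    using that assms(3) submodule_mact by blast
qed

lemma essential_in_Union_chain:
  assumes C: "subset.chain \<K> C" "C \<noteq> {}" and ess: "\<And>K. K \<in> C \<Longrightarrow> essential_in A M U K"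
  shows "essential_in A M U (\<Union>C)"
  unfolding essential_in_def
proof (intro conjI allI impI)
  have sub: "\<And>K. K \<in> C \<Longrightarrow> submodule A M K \<and> U \<subseteq> K" and U: "submodule A M U"
    using ess C(2) unfolding essential_in_def by blast+
  show "submodule A M U" by (fact U)
  show "submodule A M (\<Union>C)"
    using submodule_Union_chain[OF C] sub by blast
  show "U \<subseteq> \<Union>C"
    using C(2) sub by blast
  fix W assume W: "submodule A M W \<and> W \<subseteq> \<Union>C \<and> W \<noteq> {mzero M}"
  then obtain w where w: "w \<in> W" "w \<noteq> mzero M"
    using submodule_nonzero_elem by blast
  then obtain K where K: "K \<in> C" "w \<in> K"
    using W by blast
  have "W \<inter> K \<noteq> {mzero M}"
    using w K by blast
  then have "(W \<inter> K) \<inter> U \<noteq> {mzero M}"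
    using essential_inD[OF ess[OF K(1)] submodule_Int] W sub K(1) by blast
  then show "W \<inter> U \<noteq> {mzero M}"
    by (rule ne_singleton_mono) (use W U sub[OF K(1)] submodule_zero in auto)
qed

lemma ex_closed_essential_extension:
  assumes U: "submodule A M U"
  shows "\<exists>K. essential_in A M U K \<and> closed_in A M K (mcarrier M)"
proof -
  let ?\<E> = "{K. essential_in A M U K}"
  have "\<exists>K\<in>?\<E>. \<forall>Z\<in>?\<E>. K \<subseteq> Z \<longrightarrow> Z = K"
  proof (rule subset_Zorn_nonempty)
    show "?\<E> \<noteq> {}"
      using essential_in_refl[OF U] by blast
    fix C assume C: "C \<noteq> {}" "subset.chain ?\<E> C"
    then have "\<And>K. K \<in> C \<Longrightarrow> essential_in A M U K"
      unfolding subset_chain_def by blast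
    then show "\<Union>C \<in> ?\<E>"
      using essential_in_Union_chain[OF C(2,1)] by simp
  qed
  then obtain K where K: "essential_in A M U K" and max: "\<And>Z. essential_in A M U Z \<Longrightarrow> K \<subseteq> Z \<Longrightarrow> Z = K"
    by auto
  have "closed_in A M K (mcarrier M)"
    unfolding closed_in_def
  proof (intro conjI allI impI)
    show "submodule A M K"
      using K unfolding essential_in_def by blast
    then show "submodule A M (mcarrier M)" "K \<subseteq> mcarrier M"
      by (simp_all add: submodule_mcarrier submodule_subset)
    fix Z assume "submodule A M Z \<and> Z \<subseteq> mcarrier M \<and> essential_in A M K Z"
    then have KZ: "essential_in A M K Z"
      by blast
    then have "K \<subseteq> Z"
      unfolding essential_in_def by blast
    then show "Z = K"
      by (rule max[OF essential_in_trans[OF K KZ]])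
  qed
  then show ?thesis
    using K by blast
qed

end

section \<open>Quasi-injectivity\<close>

lemma uniform_image:
  assumes M: "rmodule A M" and N: "rmodule A N" and S: "submodule A M S"
    and f: "rhom A M S N (mcarrier N) f" and inj: "inj_on f S" and unif: "uniform A M S"
  shows "uniform A N (f ` S)"
proof -
  interpret M: rmod A M by (rule rmod.intro) fact
  interpret N: rmod A N by (rule rmod.intro) fact
  have f0: "f (mzero M) = mzero N"
    using rhom_zero[OF M N S subset_refl f] .
  have nonzero: "f x \<noteq> mzero N" if "x \<in> S" "x \<noteq> mzero M" for x
    using that f0 inj M.submodule_zero[OF S] unfolding inj_on_def by metis
  have preimage: "submodule A M {x \<in> S. f x \<in> U} \<and> {x \<in> S. f x \<in> U} \<subseteq> S \<and> {x \<in> S. f x \<in> U} \<noteq> {mzero M}"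
    if U: "submodule A N U" "U \<subseteq> f ` S" "U \<noteq> {mzero N}" for U
  proof -
    obtain u where "u \<in> U" "u \<noteq> mzero N"
      using N.submodule_nonzero_elem[OF U(1,3)] by blast
    then obtain x where "x \<in> S" "f x \<in> U" "x \<noteq> mzero M"
      using U(2) f0 by blast
    then show ?thesis
      using submodule_preimage[OF M N S subset_refl f U(1)] by blast
  qed
  show ?thesis
    unfolding uniform_def
  proof (intro conjI allI impI)
    obtain x where "x \<in> S" "x \<noteq> mzero M"
      using unif M.submodule_nonzero_elem[OF S] unfolding uniform_def by blast
    then show "f ` S \<noteq> {mzero N}"
      using nonzero by blast
    fix U V assume UV: "submodule A N U \<and> submodule A N V \<and> U \<subseteq> f ` S \<and> V \<subseteq> f ` S \<and>
      U \<noteq> {mzero N} \<and> V \<noteq> {mzero N}"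
    then have PU: "submodule A M {x \<in> S. f x \<in> U}" "{x \<in> S. f x \<in> U} \<subseteq> S" "{x \<in> S. f x \<in> U} \<noteq> {mzero M}"
      and PV: "submodule A M {x \<in> S. f x \<in> V}" "{x \<in> S. f x \<in> V} \<subseteq> S" "{x \<in> S. f x \<in> V} \<noteq> {mzero M}"
      using preimage by simp_all
    then have "{x \<in> S. f x \<in> U} \<inter> {x \<in> S. f x \<in> V} \<noteq> {mzero M}"
      using M.uniformD[OF unif PU(1) PV(1) PU(2) PV(2)] by metis
    then obtain x where "x \<in> S" "f x \<in> U" "f x \<in> V" "x \<noteq> mzero M"
      using M.submodule_nonzero_elem[OF M.submodule_Int[OF PU(1) PV(1)]] by auto
    then show "U \<inter> V \<noteq> {mzero N}"
      using nonzero by blast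
  qed
qed

lemma aut_invariant_hull_endo_invariant:
  fixes A :: "('r, 'b) ring_scheme" and Y :: "('m, 'r) rmodule" and E :: "('e, 'r) rmodule"
  assumes Y: "rmodule A Y" and K: "submodule A Y K" "uniform A Y K"
    and ai: "aut_invariant TYPE('e) A Y K" and hull: "injective_hull A Y K E \<iota>"
    and h: "rhom A E (mcarrier E) E (mcarrier E) h"
  shows "h ` \<iota> ` K \<subseteq> \<iota> ` K"
proof -
  have E: "rmodule A E" and baer: "baer_injective A E" and \<iota>: "rhom A Y K E (mcarrier E) \<iota>"
    and inj: "inj_on \<iota> K" and ess: "essential_in A E (\<iota> ` K) (mcarrier E)"
    using hull unfolding injective_hull_def by blast+
  interpret E: rmod A E by (rule rmod.intro) fact
  have "uniform A E (mcarrier E)"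
    using E.uniform_essential_extension[OF ess uniform_image[OF Y E K(1) \<iota> inj K(2)]] .
  then show ?thesis
    using E.fully_invariant_if_aut_invariant[OF baer _ submodule_image[OF Y E K(1) subset_refl \<iota>] _ h]
      ai hull unfolding aut_invariant_def by blast
qed

text \<open>Transport \<open>f\<close> into the injective hull, extend it there, and pull the extension back to \<open>K\<close>,
  which it leaves invariant.\<close>
lemma uniform_aut_invariant_quasi_injective:
  fixes A :: "('r, 'b) ring_scheme" and Y :: "('m, 'r) rmodule"
  assumes Y: "rmodule A Y" and K: "submodule A Y K" "uniform A Y K"
    and ai: "aut_invariant TYPE('e) A Y K"
  shows "quasi_injective A Y K"
  unfolding quasi_injective_def
proof (intro allI impI, elim conjE)
  obtain E :: "('e, 'r) rmodule" and \<iota> where hull: "injective_hull A Y K E \<iota>"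
    using ai unfolding aut_invariant_def by blast
  then have E: "rmodule A E" and baer: "baer_injective A E" and \<iota>: "rhom A Y K E (mcarrier E) \<iota>"
    and inj: "inj_on \<iota> K"
    unfolding injective_hull_def by blast+
  interpret E: rmod A E by (rule rmod.intro) fact
  fix X f assume X: "submodule A Y X" "X \<subseteq> K" and f: "rhom A Y X Y K f"
  have \<iota>X: "rhom A Y X E (mcarrier E) \<iota>" "inj_on \<iota> X"
    using rhom_subset[OF \<iota> X(2)] inj_on_subset[OF inj X(2)] .
  have "rhom A E (\<iota> ` X) E (mcarrier E) (\<iota> \<circ> (f \<circ> inv_into X \<iota>))"
    using rhom_comp[OF rhom_comp[OF rhom_inv_into[OF X(1) \<iota>X] f] \<iota>] .
  then obtain h where h: "rhom A E (mcarrier E) E (mcarrier E) h"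
    and h_ext: "\<forall>e\<in>\<iota> ` X. h e = (\<iota> \<circ> (f \<circ> inv_into X \<iota>)) e"
    using E.baer_injective_extend[OF baer submodule_image[OF Y E X(1) subset_refl \<iota>X(1)]] by blast
  have "rhom A E (\<iota> ` K) E (\<iota> ` K) h"
    using rhom_retarget[OF rhom_subset[OF h] aut_invariant_hull_endo_invariant[OF Y K ai hull h]]
      E.submodule_subset[OF submodule_image[OF Y E K(1) subset_refl \<iota>]] by blast
  then have "rhom A Y K Y K (inv_into K \<iota> \<circ> (h \<circ> \<iota>))"
    using rhom_comp[OF rhom_comp[OF rhom_retarget[OF \<iota> subset_refl]] rhom_inv_into[OF K(1) \<iota> inj]]
    by blast
  moreover have "(inv_into K \<iota> \<circ> (h \<circ> \<iota>)) x = f x" if "x \<in> X" for x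
    using that h_ext \<iota>X(2) inj rhom_into[OF f] by simp
  ultimately show "\<exists>g. rhom A Y K Y K g \<and> (\<forall>x\<in>X. g x = f x)"
    by blast
qed

section \<open>Semiprime rings\<close>

lemma (in ring) idealI2:
  assumes "I \<subseteq> carrier R" "\<zero> \<in> I" "\<And>x y. x \<in> I \<Longrightarrow> y \<in> I \<Longrightarrow> x \<oplus> y \<in> I"
    and "\<And>x a. x \<in> I \<Longrightarrow> a \<in> carrier R \<Longrightarrow> a \<otimes> x \<in> I"
    and "\<And>x a. x \<in> I \<Longrightarrow> a \<in> carrier R \<Longrightarrow> x \<otimes> a \<in> I"
  shows "ideal I R"
proof (rule idealI[OF ring_axioms])
  show "subgroup I (add_monoid R)"
  proof
    fix x assume "x \<in> I"
    then have "\<ominus> x = (\<ominus> \<one>) \<otimes> x" "x \<in> carrier R"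
      using assms(1) l_minus[of \<one> x] by auto
    then show "inv\<^bsub>add_monoid R\<^esub> x \<in> I"
      using assms(4)[OF \<open>x \<in> I\<close>] by (simp add: a_inv_def)
  qed (use assms in auto)
qed (use assms in auto)

lemma (in ring) ideal_left_annihilator:
  assumes T: "T \<subseteq> carrier R"
  shows "ideal {z \<in> carrier R. \<forall>t\<in>T. \<forall>a\<in>carrier R. t \<otimes> a \<otimes> z = \<zero>} R"
proof (rule idealI2)
  fix z c assume z: "z \<in> {z \<in> carrier R. \<forall>t\<in>T. \<forall>a\<in>carrier R. t \<otimes> a \<otimes> z = \<zero>}" and c: "c \<in> carrier R"
  have "t \<otimes> a \<otimes> (c \<otimes> z) = t \<otimes> (a \<otimes> c) \<otimes> z" "t \<otimes> a \<otimes> (z \<otimes> c) = t \<otimes> a \<otimes> z \<otimes> c"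
    if "t \<in> T" "a \<in> carrier R" for t a
    using that c z[THEN CollectD, THEN conjunct1] subsetD[OF T] by (simp_all add: m_assoc)
  then show "c \<otimes> z \<in> {z \<in> carrier R. \<forall>t\<in>T. \<forall>a\<in>carrier R. t \<otimes> a \<otimes> z = \<zero>}"
    and "z \<otimes> c \<in> {z \<in> carrier R. \<forall>t\<in>T. \<forall>a\<in>carrier R. t \<otimes> a \<otimes> z = \<zero>}"
    using z c by auto
qed (use T in \<open>auto simp: r_distr subset_iff\<close>)

lemma (in ring) ideal_right_annihilator:
  assumes T: "T \<subseteq> carrier R"
  shows "ideal {z \<in> carrier R. \<forall>a\<in>carrier R. \<forall>t\<in>T. z \<otimes> a \<otimes> t = \<zero>} R"
proof (rule idealI2)
  fix z c assume z: "z \<in> {z \<in> carrier R. \<forall>a\<in>carrier R. \<forall>t\<in>T. z \<otimes> a \<otimes> t = \<zero>}" and c: "c \<in> carrier R"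
  have "c \<otimes> z \<otimes> a \<otimes> t = c \<otimes> (z \<otimes> a \<otimes> t)" "z \<otimes> c \<otimes> a \<otimes> t = z \<otimes> (c \<otimes> a) \<otimes> t"
    if "t \<in> T" "a \<in> carrier R" for t a
    using that c z[THEN CollectD, THEN conjunct1] subsetD[OF T] by (simp_all add: m_assoc)
  then show "c \<otimes> z \<in> {z \<in> carrier R. \<forall>a\<in>carrier R. \<forall>t\<in>T. z \<otimes> a \<otimes> t = \<zero>}"
    and "z \<otimes> c \<in> {z \<in> carrier R. \<forall>a\<in>carrier R. \<forall>t\<in>T. z \<otimes> a \<otimes> t = \<zero>}"
    using z c by auto
qed (use T in \<open>auto simp: l_distr subset_iff\<close>)

text \<open>First \<open>Idl B\<close> lies in the left annihilator of \<open>B' R\<close>, then \<open>Idl B'\<close> in the right annihilator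
  of \<open>R (Idl B)\<close>.\<close>
lemma (in ring) genideal_mult_zero:
  assumes B: "B \<subseteq> carrier R" and B': "B' \<subseteq> carrier R"
    and zero: "\<And>b' a b. b' \<in> B' \<Longrightarrow> a \<in> carrier R \<Longrightarrow> b \<in> B \<Longrightarrow> b' \<otimes> a \<otimes> b = \<zero>"
    and p: "p \<in> Idl B'" and q: "q \<in> Idl B"
  shows "p \<otimes> q = \<zero>"
proof -
  have left: "Idl B \<subseteq> {z \<in> carrier R. \<forall>t\<in>B'. \<forall>a\<in>carrier R. t \<otimes> a \<otimes> z = \<zero>}"
    by (rule genideal_minimal[OF ideal_left_annihilator[OF B']]) (use B zero in auto)
  have IB: "Idl B \<subseteq> carrier R"
    using ideal.Icarr[OF genideal_ideal[OF B]] by blast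
  have "Idl B' \<subseteq> {z \<in> carrier R. \<forall>a\<in>carrier R. \<forall>t\<in>Idl B. z \<otimes> a \<otimes> t = \<zero>}"
    by (rule genideal_minimal[OF ideal_right_annihilator[OF IB]]) (use B' left in blast)
  then have "p \<otimes> \<one> \<otimes> q = \<zero>" "p \<in> carrier R"
    using p q by auto
  then show ?thesis by (simp add: r_one)
qed

lemma semiprime_square_zero:
  fixes A (structure)
  assumes sp: "semiprime A" and I: "ideal I A"
    and zero: "\<And>p q. p \<in> I \<Longrightarrow> q \<in> I \<Longrightarrow> p \<otimes> q = \<zero>"
  shows "I = {\<zero>}"
proof -
  interpret ring A
    using sp unfolding semiprime_def by blast
  have "ideal_prod A I I \<subseteq> {\<zero>}"
  proof
    fix s assume "s \<in> ideal_prod A I I"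
    then show "s \<in> {\<zero>}"
      by (induct s rule: ideal_prod.induct) (simp_all add: zero)
  qed
  moreover have "\<zero> \<in> ideal_prod A I I"
    using ideal_prod.prod[of \<zero> I \<zero> I A] ideal.Icarr[OF I] additive_subgroup.zero_closed[OF ideal.axioms(1)[OF I]]
    by simp
  ultimately have "ideal_pow A I 1 = {\<zero>}"
    unfolding ideal_pow_def by auto
  moreover have "\<forall>J. ideal J A \<and> (\<exists>n. ideal_pow A J n = {\<zero>}) \<longrightarrow> J = {\<zero>}"
    using sp unfolding semiprime_def by (rule conjunct2)
  ultimately show ?thesis
    using I by blast
qed

lemma semiprime_zero_if_sandwich_zero:
  fixes A (structure)
  assumes sp: "semiprime A" and z: "z \<in> carrier A"
    and zero: "\<And>a. a \<in> carrier A \<Longrightarrow> z \<otimes> a \<otimes> z = \<zero>"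
  shows "z = \<zero>"
proof -
  interpret ring A
    using sp unfolding semiprime_def by blast
  have zs: "{z} \<subseteq> carrier A"
    using z by simp
  have "Idl {z} = {\<zero>}"
  proof (rule semiprime_square_zero[OF sp genideal_ideal[OF zs]])
    fix p q assume "p \<in> Idl {z}" "q \<in> Idl {z}"
    then show "p \<otimes> q = \<zero>"
      using genideal_mult_zero[OF zs zs] zero by blast
  qed
  then show ?thesis
    using genideal_self'[OF z] by blast
qed

lemma semiprime_orthogonal_ideals_independent:
  fixes A (structure)
  assumes sp: "semiprime A" and ideals: "\<And>J. J \<in> \<S> \<Longrightarrow> ideal J A"
    and orth: "\<And>J J' p q. J \<in> \<S> \<Longrightarrow> J' \<in> \<S> \<Longrightarrow> J \<noteq> J' \<Longrightarrow> p \<in> J \<Longrightarrow> q \<in> J' \<Longrightarrow> p \<otimes> q = \<zero>"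
  shows "independent_ideals A \<S>"
  unfolding independent_ideals_def
proof (intro allI impI ballI, elim conjE)
  interpret ring A
    using sp unfolding semiprime_def by blast
  fix F g K
  assume F: "finite F" "F \<subseteq> \<S>" and g: "\<forall>J\<in>F. g J \<in> J" and sum: "finsum A g F = \<zero>" and K: "K \<in> F"
  have gc: "g \<in> F \<rightarrow> carrier A"
  proof
    fix J assume "J \<in> F"
    then show "g J \<in> carrier A"
      using g F(2) ideal.Icarr[OF ideals] by blast
  qed
  have "g K \<otimes> a \<otimes> g K = \<zero>" if a: "a \<in> carrier A" for a
  proof -
    have ga: "g K \<otimes> a \<in> carrier A" "g K \<otimes> a \<in> K"
      using gc K a g ideal.I_r_closed[OF ideals] F(2) by auto
    have "\<zero> = g K \<otimes> a \<otimes> finsum A g F"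
      using sum ga by simp
    also have "\<dots> = (\<Oplus>J\<in>F. g K \<otimes> a \<otimes> g J)"
      using finsum_rdistr[OF F(1) ga(1) gc] .
    also have "\<dots> = (\<Oplus>J\<in>F. if J = K then g K \<otimes> a \<otimes> g J else \<zero>)"
    proof (rule finsum_cong')
      show "(\<lambda>J. if J = K then g K \<otimes> a \<otimes> g J else \<zero>) \<in> F \<rightarrow> carrier A"
        using ga gc by (auto simp: Pi_iff)
      show "g K \<otimes> a \<otimes> g J = (if J = K then g K \<otimes> a \<otimes> g J else \<zero>)" if "J \<in> F" for J
        using orth[of K J, OF _ _ _ ga(2)] that g F(2) K by auto
    qed simp
    also have "\<dots> = g K \<otimes> a \<otimes> g K"
      by (rule add.finprod_singleton_swap[OF K F(1)]) (use ga gc in \<open>auto simp: Pi_iff\<close>)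
    finally show ?thesis by simp
  qed
  then show "g K = \<zero>"
    using semiprime_zero_if_sandwich_zero[OF sp] gc K by blast
qed

lemma semiprime_orthogonal_sequence:
  fixes A (structure)
  assumes sp: "semiprime A" and I: "\<And>n::nat. ideal (I n) A" "\<And>n. I n \<noteq> {\<zero>}"
    and orth: "\<And>m n p q. m \<noteq> n \<Longrightarrow> p \<in> I m \<Longrightarrow> q \<in> I n \<Longrightarrow> p \<otimes> q = \<zero>"
  shows "\<not> no_infinite_direct_sum_of_ideals A"
proof -
  have "inj I"
  proof (rule injI, rule ccontr)
    fix m n assume "I m = I n" "m \<noteq> n"
    have "I n = {\<zero>}"
    proof (rule semiprime_square_zero[OF sp I(1)])
      fix p q assume "p \<in> I n" "q \<in> I n"
      then show "p \<otimes> q = \<zero>"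
        using orth[OF \<open>m \<noteq> n\<close>] \<open>I m = I n\<close> by simp
    qed
    then show False
      using I(2) by blast
  qed
  then have "infinite (range I)"
    using finite_imageD by blast
  moreover have "independent_ideals A (range I)"
  proof (rule semiprime_orthogonal_ideals_independent[OF sp])
    fix J J' p q assume "J \<in> range I" "J' \<in> range I" "J \<noteq> J'" "p \<in> J" "q \<in> J'"
    moreover obtain m n where "J = I m" "J' = I n"
      using \<open>J \<in> range I\<close> \<open>J' \<in> range I\<close> by blast
    ultimately have "m \<noteq> n" "p \<in> I m" "q \<in> I n"
      by auto
    then show "p \<otimes> q = \<zero>"
      by (rule orth)
  qed (use I in blast)
  moreover have "\<forall>J\<in>range I. ideal J A \<and> J \<noteq> {\<zero>}"
    by (simp add: I)
  ultimately show ?thesis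
    unfolding no_infinite_direct_sum_of_ideals_def by blast
qed

section \<open>Existence of a uniform submodule\<close>

definition disjoint_submodules_hom_zero :: "('r, 'b) ring_scheme \<Rightarrow> ('m, 'r) rmodule \<Rightarrow> bool" where
  "disjoint_submodules_hom_zero A M \<longleftrightarrow>
     (\<forall>D1 D2 f. submodule A M D1 \<and> submodule A M D2 \<and> D1 \<inter> D2 = {mzero M} \<and> rhom A M D1 M D2 f
        \<longrightarrow> (\<forall>x\<in>D1. f x = mzero M))"

lemma disjoint_submodules_hom_zeroD:
  "disjoint_submodules_hom_zero A M \<Longrightarrow> submodule A M D1 \<Longrightarrow> submodule A M D2 \<Longrightarrow>
   D1 \<inter> D2 = {mzero M} \<Longrightarrow> rhom A M D1 M D2 f \<Longrightarrow> x \<in> D1 \<Longrightarrow> f x = mzero M"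
  unfolding disjoint_submodules_hom_zero_def by blast

context rmod
begin

lemma inj_on_mact_right_ideal:
  assumes x: "x \<in> mcarrier M" and B: "right_ideal A B"
    and faithful: "\<forall>c\<in>B. mact M x c = mzero M \<longrightarrow> c = \<zero>\<^bsub>A\<^esub>"
  shows "inj_on (mact M x) B"
proof (rule inj_onI)
  interpret R: rmod A "regular_rmodule A"
    by (rule rmod.intro, rule rmodule_regular_rmodule, rule A.ring_axioms)
  have B': "submodule A (regular_rmodule A) B"
    using B unfolding right_ideal_def .
  fix c d assume cd: "c \<in> B" "d \<in> B" "mact M x c = mact M x d"
  then have cdA: "c \<in> carrier A" "d \<in> carrier A"
    using R.submodule_subset[OF B'] by auto
  have "c \<ominus>\<^bsub>A\<^esub> d = c \<oplus>\<^bsub>A\<^esub> d \<otimes>\<^bsub>A\<^esub> (\<ominus>\<^bsub>A\<^esub> \<one>\<^bsub>A\<^esub>)"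
    using cdA by (simp add: A.minus_eq A.r_minus)
  then have "c \<ominus>\<^bsub>A\<^esub> d \<in> B"
    using cd R.submodule_madd[OF B'] R.submodule_mact[OF B'] by simp
  moreover have "mact M x (c \<ominus>\<^bsub>A\<^esub> d) = mzero M"
    using cdA cd(3) x by (simp add: A.minus_eq mact_add mact_a_inv)
  ultimately have "c \<oplus>\<^bsub>A\<^esub> (\<ominus>\<^bsub>A\<^esub> d) = \<zero>\<^bsub>A\<^esub>"
    using faithful by (simp add: A.minus_eq)
  then show "c = d"
    using A.minus_equality[of c "\<ominus>\<^bsub>A\<^esub> d"] cdA by simp
qed

text \<open>The map \<open>x c \<mapsto> x' (b' a c)\<close> is a homomorphism between the disjoint submodules \<open>xB\<close> and
  \<open>x'B'\<close>, so it vanishes; evaluating at \<open>x b\<close> gives \<open>x' (b' a b) = 0\<close>.\<close>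
lemma right_ideals_orthogonal_if_no_hom:
  assumes no_hom: "disjoint_submodules_hom_zero A M"
    and U: "submodule A M U" "submodule A M U'" "U \<inter> U' = {mzero M}" and x: "x \<in> U" "x' \<in> U'"
    and B: "right_ideal A B" "\<forall>c\<in>B. mact M x c = mzero M \<longrightarrow> c = \<zero>\<^bsub>A\<^esub>"
    and B': "right_ideal A B'" "\<forall>c\<in>B'. mact M x' c = mzero M \<longrightarrow> c = \<zero>\<^bsub>A\<^esub>"
    and elems: "b' \<in> B'" "a \<in> carrier A" "b \<in> B"
  shows "b' \<otimes>\<^bsub>A\<^esub> a \<otimes>\<^bsub>A\<^esub> b = \<zero>\<^bsub>A\<^esub>"
proof -
  interpret R: rmod A "regular_rmodule A"
    by (rule rmod.intro, rule rmodule_regular_rmodule, rule A.ring_axioms)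
  have subB: "submodule A (regular_rmodule A) B" "submodule A (regular_rmodule A) B'"
    using B(1) B'(1) unfolding right_ideal_def by blast+
  have BA: "B \<subseteq> carrier A" "B' \<subseteq> carrier A"
    using R.submodule_subset[OF subB(1)] R.submodule_subset[OF subB(2)] by simp_all
  have xM: "x \<in> mcarrier M" "x' \<in> mcarrier M"
    using x submodule_subset[OF U(1)] submodule_subset[OF U(2)] by blast+
  have hx: "rhom A (regular_rmodule A) B M (mcarrier M) (mact M x)"
    and hx': "rhom A (regular_rmodule A) B' M (mcarrier M) (mact M x')"
    using rhom_subset[OF rhom_mact_elem] xM BA by blast+
  have D: "submodule A M (mact M x ` B)" "submodule A M (mact M x' ` B')"
    using submodule_image[OF R.rmodule rmodule subB(1) subset_refl hx]
      submodule_image[OF R.rmodule rmodule subB(2) subset_refl hx'] .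
  have "mact M x ` B \<subseteq> U" "mact M x' ` B' \<subseteq> U'"
    using x BA U(1,2) submodule_mact by blast+
  then have disjoint: "mact M x ` B \<inter> mact M x' ` B' = {mzero M}"
    using U(3) submodule_zero[OF D(1)] submodule_zero[OF D(2)] by blast
  have "b' \<otimes>\<^bsub>A\<^esub> a \<otimes>\<^bsub>A\<^esub> c \<in> B'" if "c \<in> B" for c
    using R.submodule_mact[OF subB(2) R.submodule_mact[OF subB(2) elems(1,2)]] that BA by auto
  then have left_mult: "rhom A (regular_rmodule A) B (regular_rmodule A) B' (\<lambda>c. b' \<otimes>\<^bsub>A\<^esub> a \<otimes>\<^bsub>A\<^esub> c)"
    using rhom_retarget[OF rhom_subset[OF rhom_left_mult[OF A.ring_axioms, of "b' \<otimes>\<^bsub>A\<^esub> a"] BA(1)]]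
      elems BA by blast
  have "rhom A M (mact M x ` B) M (mact M x' ` B')
      (mact M x' \<circ> ((\<lambda>c. b' \<otimes>\<^bsub>A\<^esub> a \<otimes>\<^bsub>A\<^esub> c) \<circ> inv_into B (mact M x)))"
    using rhom_comp[OF rhom_comp[OF rhom_inv_into[OF subB(1) hx inj_on_mact_right_ideal[OF xM(1) B]] left_mult]
        rhom_retarget[OF hx' subset_refl]] .
  then have "mact M x' (b' \<otimes>\<^bsub>A\<^esub> a \<otimes>\<^bsub>A\<^esub> b) = mzero M"
    using disjoint_submodules_hom_zeroD[OF no_hom D disjoint, of _ "mact M x b"] elems(3)
      inj_on_mact_right_ideal[OF xM(1) B] by simp
  then show ?thesis
    using B'(2) \<open>b \<in> B\<close> \<open>\<And>c. c \<in> B \<Longrightarrow> b' \<otimes>\<^bsub>A\<^esub> a \<otimes>\<^bsub>A\<^esub> c \<in> B'\<close> by blast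
qed

lemma ex_disjoint_submodules_if_no_uniform:
  assumes nonzero: "mcarrier M \<noteq> {mzero M}"
    and no_uniform: "\<nexists>U. submodule A M U \<and> uniform A M U"
  shows "\<exists>U :: nat \<Rightarrow> 'm set. \<forall>n. submodule A M (U n) \<and> U n \<noteq> {mzero M} \<and> (\<forall>m. m \<noteq> n \<longrightarrow> U m \<inter> U n = {mzero M})"
proof -
  let ?split = "\<lambda>W U V. submodule A M U \<and> submodule A M V \<and> U \<subseteq> W \<and> V \<subseteq> W \<and>
    U \<noteq> {mzero M} \<and> V \<noteq> {mzero M} \<and> U \<inter> V = {mzero M}"
  have "\<exists>U V. ?split W U V" if "submodule A M W" "W \<noteq> {mzero M}" for W
    using that no_uniform unfolding uniform_def by meson
  then obtain fU fV where split: "\<And>W. submodule A M W \<Longrightarrow> W \<noteq> {mzero M} \<Longrightarrow> ?split W (fU W) (fV W)"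
    by metis
  define W where "W n = (fV ^^ n) (mcarrier M)" for n
  have W: "submodule A M (W n) \<and> W n \<noteq> {mzero M}" for n
    by (induction n) (use submodule_mcarrier nonzero split in \<open>simp_all add: W_def\<close>)
  define U where "U n = fU (W n)" for n
  have UW: "?split (W n) (U n) (W (Suc n))" for n
    using split W by (simp add: U_def W_def)
  have disjoint: "U m \<inter> U n = {mzero M}" if "m < n" for m n
  proof -
    have "W n \<subseteq> W (Suc m)"
      using lift_Suc_antimono_le[of W] UW that by (metis Suc_leI)
    then have "U m \<inter> U n \<subseteq> U m \<inter> W (Suc m)"
      using UW by blast
    then show ?thesis
      using UW submodule_zero by blast
  qed
  have "U m \<inter> U n = {mzero M}" if "m \<noteq> n" for m n
    using that disjoint disjoint[of n m] by (metis Int_commute linorder_neqE_nat)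
  then show ?thesis
    using UW by blast
qed

end

lemma nonsingular_faithful_right_ideal:
  assumes Y: "rmodule A Y" and ns: "nonsingular A Y" and x: "x \<in> mcarrier Y" "x \<noteq> mzero Y"
  shows "\<exists>B. right_ideal A B \<and> B \<noteq> {\<zero>\<^bsub>A\<^esub>} \<and> (\<forall>c\<in>B. mact Y x c = mzero Y \<longrightarrow> c = \<zero>\<^bsub>A\<^esub>)"
proof -
  interpret Y: rmod A Y by (rule rmod.intro) fact
  interpret R: rmod A "regular_rmodule A"
    by (rule rmod.intro, rule rmodule_regular_rmodule, rule Y.A.ring_axioms)
  let ?ann = "{a \<in> carrier A. mact Y x a = mzero Y}"
  have "submodule A (regular_rmodule A) ?ann"
    using submodule_preimage[OF R.rmodule Y R.submodule_mcarrier[simplified] subset_refl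
        Y.rhom_mact_elem[OF x(1)] Y.submodule_zero_module] by simp
  moreover have "\<not> essential_in A (regular_rmodule A) ?ann (carrier A)"
    using ns x unfolding nonsingular_def by blast
  ultimately obtain W where W: "submodule A (regular_rmodule A) W" "W \<noteq> {\<zero>\<^bsub>A\<^esub>}" "W \<inter> ?ann = {\<zero>\<^bsub>A\<^esub>}"
    unfolding essential_in_def using R.submodule_mcarrier by auto
  then have "\<forall>c\<in>W. mact Y x c = mzero Y \<longrightarrow> c = \<zero>\<^bsub>A\<^esub>"
    using R.submodule_subset by auto
  then show ?thesis
    using W unfolding right_ideal_def by blast
qed

lemma ex_uniform_submodule:
  fixes A :: "('r, 'b) ring_scheme" and Y :: "('m, 'r) rmodule"
  assumes sp: "semiprime A" and nid: "no_infinite_direct_sum_of_ideals A"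
    and Y: "rmodule A Y" and ns: "nonsingular A Y"
    and no_hom: "disjoint_submodules_hom_zero A Y"
    and nonzero: "mcarrier Y \<noteq> {mzero Y}"
  shows "\<exists>U. submodule A Y U \<and> uniform A Y U"
proof (rule ccontr)
  assume no_uniform: "\<nexists>U. submodule A Y U \<and> uniform A Y U"
  interpret Y: rmod A Y by (rule rmod.intro) fact
  obtain U :: "nat \<Rightarrow> 'm set" where U: "\<And>n. submodule A Y (U n)" "\<And>n. U n \<noteq> {mzero Y}"
    and disjoint: "\<And>m n. m \<noteq> n \<Longrightarrow> U m \<inter> U n = {mzero Y}"
    using Y.ex_disjoint_submodules_if_no_uniform[OF nonzero no_uniform] by metis
  have "\<forall>n. \<exists>x. x \<in> U n \<and> x \<noteq> mzero Y"
    using Y.submodule_nonzero_elem[OF U(1) U(2)] by blast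
  then obtain x where x: "\<And>n. x n \<in> U n" "\<And>n. x n \<noteq> mzero Y"
    by metis
  have "\<forall>n. \<exists>B. right_ideal A B \<and> B \<noteq> {\<zero>\<^bsub>A\<^esub>} \<and> (\<forall>c\<in>B. mact Y (x n) c = mzero Y \<longrightarrow> c = \<zero>\<^bsub>A\<^esub>)"
    using nonsingular_faithful_right_ideal[OF Y ns] x Y.submodule_subset[OF U(1)] by blast
  then obtain B where B: "\<And>n. right_ideal A (B n)" "\<And>n. B n \<noteq> {\<zero>\<^bsub>A\<^esub>}"
    and faithful: "\<And>n. \<forall>c\<in>B n. mact Y (x n) c = mzero Y \<longrightarrow> c = \<zero>\<^bsub>A\<^esub>"
    by metis
  have BA: "B n \<subseteq> carrier A" and B0: "\<zero>\<^bsub>A\<^esub> \<in> B n" for n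
    using B(1) unfolding right_ideal_def submodule_def by auto
  define I where "I n = genideal A (B n)" for n
  have I: "ideal (I n) A" for n
    unfolding I_def using Y.A.genideal_ideal[OF BA] .
  have orth: "p \<otimes>\<^bsub>A\<^esub> q = \<zero>\<^bsub>A\<^esub>" if "m \<noteq> n" "p \<in> I m" "q \<in> I n" for m n p q
  proof (rule Y.A.genideal_mult_zero[OF BA BA])
    show "p \<in> genideal A (B m)" "q \<in> genideal A (B n)"
      using that(2,3) unfolding I_def .
    fix b' a b assume "b' \<in> B m" "a \<in> carrier A" "b \<in> B n"
    then show "b' \<otimes>\<^bsub>A\<^esub> a \<otimes>\<^bsub>A\<^esub> b = \<zero>\<^bsub>A\<^esub>"
      using Y.right_ideals_orthogonal_if_no_hom[OF no_hom U(1) U(1) disjoint[OF that(1)[symmetric]] x(1) x(1)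
          B(1) faithful B(1) faithful] by blast
  qed
  have nonzero_I: "I n \<noteq> {\<zero>\<^bsub>A\<^esub>}" for n
    using Y.A.genideal_self[OF BA[of n]] B(2)[of n] B0[of n] unfolding I_def by blast
  have "\<not> no_infinite_direct_sum_of_ideals A"
  proof (rule semiprime_orthogonal_sequence[OF sp])
    show "ideal (I n) A" "I n \<noteq> {\<zero>\<^bsub>A\<^esub>}" for n
      using I nonzero_I .
    show "p \<otimes>\<^bsub>A\<^esub> q = \<zero>\<^bsub>A\<^esub>" if "m \<noteq> n" "p \<in> I m" "q \<in> I n" for m n p q
      using that by (rule orth)
  qed
  then show False
    using nid by blast
qed

lemma submodule_sum_singleton: "submodule A M K \<Longrightarrow> submodule_sum A M {K} = K"
  unfolding submodule_sum_def by blast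

theorem lemma2p4:
  fixes A :: "('r, 'b) ring_scheme" and Y :: "('m, 'r) rmodule"
  assumes "semiprime A"
    and "no_infinite_direct_sum_of_ideals A"
    and "rmodule A Y"
    and "nonsingular A Y"
    and "aut_invariant TYPE('e) A Y (mcarrier Y)"
    and "square_free A Y (mcarrier Y)"
    and "\<And>D1 D2 f. submodule A Y D1 \<Longrightarrow> submodule A Y D2 \<Longrightarrow> D1 \<inter> D2 = {mzero Y}
           \<Longrightarrow> rhom A Y D1 Y D2 f \<Longrightarrow> \<forall>x\<in>D1. f x = mzero Y"
    and "\<And>\<K>. \<K> \<subseteq> {K. closed_in A Y K (mcarrier Y)}
           \<Longrightarrow> aut_invariant TYPE('e) A Y (submodule_sum A Y \<K>)"
  shows "mcarrier Y = {mzero Y} \<or>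
         (\<exists>X. submodule A Y X \<and> X \<noteq> {mzero Y} \<and> uniform A Y X \<and> quasi_injective A Y X)"
proof (cases "mcarrier Y = {mzero Y}")
  case False
  interpret Y: rmod A Y by (rule rmod.intro) (fact assms(3))
  have "disjoint_submodules_hom_zero A Y"
    using assms(7) unfolding disjoint_submodules_hom_zero_def by blast
  then obtain U where U: "submodule A Y U" "uniform A Y U"
    using ex_uniform_submodule[OF assms(1-4) _ False] by blast
  obtain K where K: "essential_in A Y U K" "closed_in A Y K (mcarrier Y)"
    using Y.ex_closed_essential_extension[OF U(1)] by blast
  have sub: "submodule A Y K" and unif: "uniform A Y K"
    using K(2) Y.uniform_essential_extension[OF K(1) U(2)] unfolding closed_in_def by blast+
  have "aut_invariant TYPE('e) A Y K"
    using assms(8)[of "{K}"] K(2) submodule_sum_singleton[OF sub] by simp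
  then have "quasi_injective A Y K"
    using uniform_aut_invariant_quasi_injective[OF assms(3) sub unif] by blast
  then show ?thesis
    using sub unif unfolding uniform_def by blast
qed simp

end
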